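(* Let $(G,* )$ be a metrizable topological group. The following are equivalent: (1) $G$ has the property ${\sf Smirnov}$-${\sf S}_c(\mathcal{O}_{\sf nbd},\mathcal{O})$; (2) $G$ has the finitary Haver property with respect to every left-invariant metric on $G$ compatible with the topology of $G$.
   Context: For a topological group $(G,* )$ with identity $e$ and a neighborhood $U$ of $e$, let $\mathcal{O}(U)=\{x*U: x\in G\}$ and $\mathcal{O}_{\sf nbd}=\{\mathcal{O}(U): U \text{ a neighborhood of } e\}$. $\mathcal{O}$ denotes the collection of all open covers of $G$. A family $\mathcal{B}$ refines $\mathcal{A}$ if every member of $\mathcal{B}$ is contained in some member of $\mathcal{A}$. ${\sf Smirnov}$-${\sf S}_c(\mathcal{A},\mathcal{B})$ is the statement: for each sequence $(A_n:n<\infty)$ of elements of $\mathcal{A}$ there exist a positive integer $k$ and a sequence $(B_n:n\le k)$ where each $B_n$ is a pairwise disjoint family of open sets refining $A_n$, such that $\bigcup_{n\le k}B_n\in\mathcal{B}$. A metrizable space $X$ is finitary Haver with respect to a metric $d$ if for each sequence $(\epsilon_n:n<\infty)$ of positive reals there exist a positive integer $k$ and a sequence $(\mathcal{V}_n:n\le k)$ where each $\mathcal{V}_n$ is a pairwise disjoint family of open sets each of $d$-diameter less than $\epsilon_n$, such that $\bigcup_{n\le k}\mathcal{V}_n$ covers $X$. A metric $d$ on $G$ is left-invariant if $d(g*x,g*y)=d(x,y)$ for all $g,x,y$. *)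

theory Defs
  imports "HOL-Analysis.Analysis" "HOL-Algebra.Coset"
begin

definition topological_group :: "('a, 'b) monoid_scheme \<Rightarrow> 'a topology \<Rightarrow> bool" where
  "topological_group G T \<longleftrightarrow> group G \<and> topspace T = carrier G \<and>
     continuous_map (prod_topology T T) T (\<lambda>(x, y). x \<otimes>\<^bsub>G\<^esub> y) \<and>
     continuous_map T T (\<lambda>x. inv\<^bsub>G\<^esub> x)"

definition nbhd_of :: "'a topology \<Rightarrow> 'a \<Rightarrow> 'a set \<Rightarrow> bool" where
  "nbhd_of T p U \<longleftrightarrow> U \<subseteq> topspace T \<and> (\<exists>V. openin T V \<and> p \<in> V \<and> V \<subseteq> U)"

definition O_of :: "('a, 'b) monoid_scheme \<Rightarrow> 'a set \<Rightarrow> 'a set set" where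
  "O_of G U = {x <#\<^bsub>G\<^esub> U | x. x \<in> carrier G}"

definition O_nbd :: "('a, 'b) monoid_scheme \<Rightarrow> 'a topology \<Rightarrow> 'a set set set" where
  "O_nbd G T = {O_of G U | U. nbhd_of T \<one>\<^bsub>G\<^esub> U}"

definition open_covers :: "'a topology \<Rightarrow> 'a set set set" where
  "open_covers T = {\<U>. (\<forall>U\<in>\<U>. openin T U) \<and> \<Union>\<U> = topspace T}"

definition refines :: "'a set set \<Rightarrow> 'a set set \<Rightarrow> bool" where
  "refines \<B> \<A> \<longleftrightarrow> (\<forall>B\<in>\<B>. \<exists>A\<in>\<A>. B \<subseteq> A)"

definition Smirnov_Sc :: "'a topology \<Rightarrow> 'a set set set \<Rightarrow> 'a set set set \<Rightarrow> bool" where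
  "Smirnov_Sc T \<AA> \<BB> \<longleftrightarrow>
     (\<forall>A :: nat \<Rightarrow> 'a set set. (\<forall>n. A n \<in> \<AA>) \<longrightarrow>
        (\<exists>k::nat. 0 < k \<and> (\<exists>B :: nat \<Rightarrow> 'a set set.
           (\<forall>n\<le>k. pairwise disjnt (B n) \<and> (\<forall>V\<in>B n. openin T V) \<and> refines (B n) (A n)) \<and>
           (\<Union>n\<le>k. B n) \<in> \<BB>)))"

text \<open>The d-diameter of S is less than eps (sup of d over S x S is < eps; the empty set has
diameter 0).\<close>
definition diam_less :: "('a \<Rightarrow> 'a \<Rightarrow> real) \<Rightarrow> 'a set \<Rightarrow> real \<Rightarrow> bool" where
  "diam_less d S eps \<longleftrightarrow> (\<exists>r<eps. 0 \<le> r \<and> (\<forall>x\<in>S. \<forall>y\<in>S. d x y \<le> r))"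

definition finitary_Haver :: "'a topology \<Rightarrow> ('a \<Rightarrow> 'a \<Rightarrow> real) \<Rightarrow> bool" where
  "finitary_Haver T d \<longleftrightarrow>
     (\<forall>eps :: nat \<Rightarrow> real. (\<forall>n. 0 < eps n) \<longrightarrow>
        (\<exists>k::nat. 0 < k \<and> (\<exists>V :: nat \<Rightarrow> 'a set set.
           (\<forall>n\<le>k. pairwise disjnt (V n) \<and> (\<forall>W\<in>V n. openin T W \<and> diam_less d W (eps n))) \<and>
           \<Union>(\<Union>n\<le>k. V n) = topspace T)))"

definition compatible_metric :: "'a topology \<Rightarrow> ('a \<Rightarrow> 'a \<Rightarrow> real) \<Rightarrow> bool" where
  "compatible_metric T d \<longleftrightarrow> Metric_space (topspace T) d \<and> Metric_space.mtopology (topspace T) d = T"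

definition left_invariant :: "('a, 'b) monoid_scheme \<Rightarrow> ('a \<Rightarrow> 'a \<Rightarrow> real) \<Rightarrow> bool" where
  "left_invariant G d \<longleftrightarrow>
     (\<forall>g\<in>carrier G. \<forall>x\<in>carrier G. \<forall>y\<in>carrier G. d (g \<otimes>\<^bsub>G\<^esub> x) (g \<otimes>\<^bsub>G\<^esub> y) = d x y)"

end

theory Submission
  imports Defs
begin

(*
  Both properties ask for finitely many disjoint open families covering G; they differ
  only in the smallness requirement on the members.  For a left-invariant metric d the
  two requirements are interchangeable:
    - a subset of a left coset x * B(e, r) of the r-ball at the identity has d-diameter
      at most 2r, so refining O(B(e, eps/3)) yields sets of diameter < eps;
    - a nonempty set W of d-diameter < eps with w in W lies inside w * B(e, eps), so
      sets of small diameter refine O(U) whenever B(e, eps) is contained in U.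
  This gives "Smirnov implies Haver" for every compatible left-invariant metric, and
  "Haver for one such metric implies Smirnov".  To close the equivalence we need that
  a compatible left-invariant metric exists at all: this is the Birkhoff-Kakutani
  theorem, proved here from scratch.  From a metric we build a chain of symmetric
  identity neighbourhoods U(n+1)^3 <= U(n), define the weight of x as 2^(1-n) for the
  first n with x not in U(n), and take as norm of z the infimum of the total weight
  of all factorisations of z.  The triangle inequality and left invariance of
  d(x,y) = norm(x^-1 y) are immediate; the key estimate weight <= 2 * norm shows that
  d induces the original topology.
*)


section \<open>Splitting a list of nonnegative weights\<close>

text \<open>This is the
  combinatorial heart of the Birkhoff-Kakutani estimate.\<close>

lemma sum_list_split_around_element:
  fixes f :: "'c \<Rightarrow> real"
  assumes "l \<noteq> []" "\<forall>x\<in>set l. 0 \<le> f x" "0 \<le> c1" "0 \<le> c2" "sum_list (map f l) \<le> c1 + c2"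
  shows "\<exists>xs a ys. l = xs @ a # ys \<and> sum_list (map f xs) \<le> c1 \<and> sum_list (map f ys) \<le> c2"
  using assms
proof (induction l arbitrary: c1)
  case Nil then show ?case by simp
next
  case (Cons x l)
  show ?case
  proof (cases "sum_list (map f l) \<le> c2")
    case True
    then show ?thesis using Cons.prems by (intro exI[of _ "[]"] exI[of _ x] exI[of _ l]) auto
  next
    case False
    have "0 \<le> sum_list (map f l)" using Cons.prems(2) by (intro sum_list_nonneg) auto
    with False Cons.prems have "l \<noteq> []" "f x \<le> c1" by auto
    then obtain xs a ys where "l = xs @ a # ys" "sum_list (map f xs) \<le> c1 - f x"
        "sum_list (map f ys) \<le> c2"
      using Cons.IH[of "c1 - f x"] Cons.prems by auto
    then show ?thesis by (intro exI[of _ "x # xs"] exI[of _ a] exI[of _ ys]) auto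
  qed
qed


section \<open>Groups with a left-invariant metric\<close>

lemma (in group) inv_mult_cancel_left: "g \<in> carrier G \<Longrightarrow> y \<in> carrier G \<Longrightarrow> inv g \<otimes> (g \<otimes> y) = y"
  by (simp add: m_assoc[symmetric])

locale left_invariant_metric_group = group G + Metric_space "carrier G" d
  for G (structure) and d :: "'a \<Rightarrow> 'a \<Rightarrow> real" +
  assumes left_invariant: "left_invariant G d"
begin

lemma dist_left_translate:
  "g \<in> carrier G \<Longrightarrow> x \<in> carrier G \<Longrightarrow> y \<in> carrier G \<Longrightarrow> d (g \<otimes> x) (g \<otimes> y) = d x y"
  using left_invariant by (simp add: left_invariant_def)

text \<open>A subset of a left coset of the r-ball around the identity has diameter less
  than 3r (in fact at most 2r; the slack makes the bound strict).\<close>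

lemma diam_less_in_left_coset_ball:
  assumes "x \<in> carrier G" "W \<subseteq> x <# mball \<one> r" "0 < r"
  shows "diam_less d W (3 * r)"
  unfolding diam_less_def
proof (intro exI[of _ "2 * r"] conjI ballI)
  show "2 * r < 3 * r" "0 \<le> 2 * r" using \<open>0 < r\<close> by auto
  fix y z assume "y \<in> W" "z \<in> W"
  then obtain u v where uv: "u \<in> mball \<one> r" "v \<in> mball \<one> r" "y = x \<otimes> u" "z = x \<otimes> v"
    using assms(2) unfolding l_coset_def by blast
  have "d y z = d u v" using uv assms(1) by (simp add: dist_left_translate)
  also have "\<dots> \<le> d u \<one> + d \<one> v" using uv by (intro triangle) auto
  also have "\<dots> \<le> 2 * r" using uv commute[of u \<one>] by auto
  finally show "d y z \<le> 2 * r" .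
qed

lemma small_set_in_left_coset_ball:
  assumes "w \<in> W" "W \<subseteq> carrier G" "diam_less d W r"
  shows "W \<subseteq> w <# mball \<one> r"
proof
  fix y assume y: "y \<in> W"
  have wy: "w \<in> carrier G" "y \<in> carrier G" using assms(1,2) y by auto
  have "d \<one> (inv w \<otimes> y) = d w y" using dist_left_translate[of "inv w" w y] wy by simp
  then have "inv w \<otimes> y \<in> mball \<one> r"
    using assms y wy unfolding diam_less_def by force
  moreover have "y = w \<otimes> (inv w \<otimes> y)" using wy by (simp add: m_assoc[symmetric])
  ultimately show "y \<in> w <# mball \<one> r" unfolding l_coset_def by blast
qed

lemma ball_cosets_in_O_nbd:
  assumes "0 < r"
  shows "O_of G (mball \<one> r) \<in> O_nbd G mtopology"
proof -
  have "nbhd_of mtopology \<one> (mball \<one> r)"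
    unfolding nbhd_of_def using assms by auto
  then show ?thesis unfolding O_nbd_def by blast
qed

lemma nbhd_contains_ball:
  assumes "nbhd_of mtopology \<one> U"
  shows "\<exists>e>0. mball \<one> e \<subseteq> U"
proof -
  obtain V where "openin mtopology V" "\<one> \<in> V" "V \<subseteq> U"
    using assms unfolding nbhd_of_def by blast
  moreover from this obtain e where "0 < e" "mball \<one> e \<subseteq> V"
    unfolding openin_mtopology by blast
  ultimately show ?thesis by blast
qed

lemma small_set_refines_O_of:
  assumes "W \<subseteq> carrier G" "diam_less d W e" "mball \<one> e \<subseteq> U"
  shows "\<exists>A\<in>O_of G U. W \<subseteq> A"
proof (cases "W = {}")
  case True
  then show ?thesis unfolding O_of_def by blast
next
  case False
  then obtain w where "w \<in> W" by blast
  have "w <# mball \<one> e \<subseteq> w <# U"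
    using assms(3) unfolding l_coset_def by auto
  then have "W \<subseteq> w <# U"
    using small_set_in_left_coset_ball[OF \<open>w \<in> W\<close> assms(1,2)] by blast
  moreover have "w <# U \<in> O_of G U" using \<open>w \<in> W\<close> assms(1) unfolding O_of_def by blast
  ultimately show ?thesis by blast
qed

lemma Smirnov_imp_finitary_Haver:
  assumes "Smirnov_Sc mtopology (O_nbd G mtopology) (open_covers mtopology)"
  shows "finitary_Haver mtopology d"
  unfolding finitary_Haver_def
proof (intro allI impI)
  fix eps :: "nat \<Rightarrow> real" assume pos: "\<forall>n. 0 < eps n"
  define A where "A n = O_of G (mball \<one> (eps n / 3))" for n
  have A_nbd: "A n \<in> O_nbd G mtopology" for n
    unfolding A_def using pos by (intro ball_cosets_in_O_nbd) auto
  obtain k B where "0 < k"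
    and B: "\<forall>n\<le>k. pairwise disjnt (B n) \<and> (\<forall>V\<in>B n. openin mtopology V) \<and> refines (B n) (A n)"
    and cov: "(\<Union>n\<le>k. B n) \<in> open_covers mtopology"
    using assms[unfolded Smirnov_Sc_def, rule_format, of A, OF A_nbd] by (elim exE conjE) (rule that)
  have "diam_less d W (eps n)" if n: "n \<le> k" and W: "W \<in> B n" for n W
  proof -
    have "refines (B n) (A n)" using B n by blast
    then obtain A0 where "A0 \<in> A n" "W \<subseteq> A0" using W unfolding refines_def by blast
    then obtain x where "x \<in> carrier G" "W \<subseteq> x <# mball \<one> (eps n / 3)"
      unfolding A_def O_of_def by blast
    then show ?thesis using diam_less_in_left_coset_ball[of x W "eps n / 3"] pos by simp
  qed
  moreover have "\<Union>(\<Union>n\<le>k. B n) = topspace mtopology"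
    using cov unfolding open_covers_def by blast
  ultimately show "\<exists>k>0. \<exists>V. (\<forall>n\<le>k. pairwise disjnt (V n) \<and>
      (\<forall>W\<in>V n. openin mtopology W \<and> diam_less d W (eps n))) \<and> \<Union>(\<Union>n\<le>k. V n) = topspace mtopology"
    using \<open>0 < k\<close> B by (intro exI[of _ k] conjI exI[of _ B]) auto
qed

lemma finitary_Haver_imp_Smirnov:
  assumes "finitary_Haver mtopology d"
  shows "Smirnov_Sc mtopology (O_nbd G mtopology) (open_covers mtopology)"
  unfolding Smirnov_Sc_def
proof (intro allI impI)
  fix A :: "nat \<Rightarrow> 'a set set" assume "\<forall>n. A n \<in> O_nbd G mtopology"
  then have "\<forall>n. \<exists>U. nbhd_of mtopology \<one> U \<and> A n = O_of G U"
    unfolding O_nbd_def by blast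
  then obtain U where U: "\<And>n. nbhd_of mtopology \<one> (U n)" "\<And>n. A n = O_of G (U n)"
    by metis
  have "\<forall>n. \<exists>e>0. mball \<one> e \<subseteq> U n" using nbhd_contains_ball U(1) by blast
  then obtain eps where eps: "\<And>n. 0 < eps n" "\<And>n. mball \<one> (eps n) \<subseteq> U n"
    by metis
  obtain k V where "0 < k"
    and V: "\<forall>n\<le>k. pairwise disjnt (V n) \<and> (\<forall>W\<in>V n. openin mtopology W \<and> diam_less d W (eps n))"
    and cov: "\<Union>(\<Union>n\<le>k. V n) = topspace mtopology"
    using assms[unfolded finitary_Haver_def, rule_format, of eps, OF eps(1)] by (elim exE conjE) (rule that)
  have "refines (V n) (A n)" if "n \<le> k" for n
    unfolding refines_def U(2)
  proof
    fix W assume "W \<in> V n"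
    then have "openin mtopology W" and small: "diam_less d W (eps n)" using V that by blast+
    then have "W \<subseteq> carrier G" using openin_subset[of mtopology W] by simp
    then show "\<exists>A\<in>O_of G (U n). W \<subseteq> A" using small_set_refines_O_of[OF _ small eps(2)] by blast
  qed
  moreover have "(\<Union>n\<le>k. V n) \<in> open_covers mtopology"
    using V cov unfolding open_covers_def by blast
  ultimately show "\<exists>k>0. \<exists>B. (\<forall>n\<le>k. pairwise disjnt (B n) \<and> (\<forall>V\<in>B n. openin mtopology V) \<and>
      refines (B n) (A n)) \<and> (\<Union>n\<le>k. B n) \<in> open_covers mtopology"
    using \<open>0 < k\<close> V by (intro exI[of _ k] conjI exI[of _ V]) auto
qed

end


section \<open>Small neighbourhoods in topological groups\<close>

locale topgroup = group G for G (structure) +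
  fixes T :: "'a topology"
  assumes topological: "topological_group G T"
begin

lemma topspace_eq: "topspace T = carrier G"
  using topological by (simp add: topological_group_def)

lemma continuous_mult: "continuous_map (prod_topology T T) T (\<lambda>(x, y). x \<otimes> y)"
  using topological by (simp add: topological_group_def)

lemma continuous_inv: "continuous_map T T (\<lambda>x. inv x)"
  using topological by (simp add: topological_group_def)

lemma openin_left_translation_preimage:
  assumes "x \<in> carrier G" "openin T W"
  shows "openin T {u \<in> carrier G. x \<otimes> u \<in> W}"
proof -
  have "continuous_map T (prod_topology T T) (\<lambda>u. (x, u))"
    by (intro continuous_map_pairedI) (simp_all add: topspace_eq assms)
  from continuous_map_compose[OF this continuous_mult]
  have "continuous_map T T (\<lambda>u. x \<otimes> u)" by (simp add: o_def)
  from openin_continuous_map_preimage[OF this assms(2)] show ?thesis by (simp add: topspace_eq)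
qed

lemma product_nbhd:
  assumes "openin T W" "\<one> \<in> W"
  obtains V where "openin T V" "\<one> \<in> V" "\<forall>a\<in>V. \<forall>b\<in>V. a \<otimes> b \<in> W"
proof -
  let ?P = "{z \<in> topspace (prod_topology T T). (\<lambda>(x, y). x \<otimes> y) z \<in> W}"
  have P_open: "openin (prod_topology T T) ?P"
    by (rule openin_continuous_map_preimage[OF continuous_mult assms(1)])
  have P_one: "(\<one>, \<one>) \<in> ?P" using assms by (simp add: topspace_eq)
  obtain V1 V2 where V: "openin T V1" "openin T V2" "\<one> \<in> V1" "\<one> \<in> V2"
    and prod: "V1 \<times> V2 \<subseteq> ?P"
    using openin_prod_topology_alt[THEN iffD1, rule_format, OF P_open P_one] by blast
  have "a \<otimes> b \<in> W" if "a \<in> V1" "b \<in> V2" for a b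
    using subsetD[OF prod, of "(a, b)"] that by simp
  then show ?thesis using V by (intro that[of "V1 \<inter> V2"] openin_Int) auto
qed

lemma symmetric_triple_nbhd:
  assumes "openin T W" "\<one> \<in> W"
  shows "\<exists>V. openin T V \<and> \<one> \<in> V \<and> V \<subseteq> W \<and> (\<forall>x\<in>V. inv x \<in> V) \<and>
            (\<forall>a\<in>V. \<forall>b\<in>V. \<forall>c\<in>V. a \<otimes> b \<otimes> c \<in> W)"
proof -
  obtain V1 where V1: "openin T V1" "\<one> \<in> V1" "\<forall>a\<in>V1. \<forall>b\<in>V1. a \<otimes> b \<in> W"
    using product_nbhd[OF assms] by blast
  obtain V2 where V2: "openin T V2" "\<one> \<in> V2" "\<forall>a\<in>V2. \<forall>b\<in>V2. a \<otimes> b \<in> V1"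
    using product_nbhd[OF V1(1,2)] by blast
  define V3 where "V3 = V2 \<inter> V1"
  have V3: "openin T V3" "\<one> \<in> V3" using V1 V2 by (auto simp: V3_def)
  have V3_carrier: "V3 \<subseteq> carrier G" using openin_subset[OF V3(1)] topspace_eq by simp
  define V where "V = {x \<in> topspace T. inv x \<in> V3} \<inter> V3"
  have "openin T V" unfolding V_def
    by (intro openin_Int openin_continuous_map_preimage[OF continuous_inv] V3)
  moreover have "\<one> \<in> V" using V3 by (simp add: V_def topspace_eq)
  moreover have "\<forall>x\<in>V. inv x \<in> V" using V3_carrier by (auto simp: V_def topspace_eq)
  moreover have triple: "\<forall>a\<in>V. \<forall>b\<in>V. \<forall>c\<in>V. a \<otimes> b \<otimes> c \<in> W"
  proof (intro ballI)
    fix a b c assume "a \<in> V" "b \<in> V" "c \<in> V"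
    then have "a \<in> V2" "b \<in> V2" "c \<in> V1" by (auto simp: V_def V3_def)
    then show "a \<otimes> b \<otimes> c \<in> W" using V1(3) V2(3) by blast
  qed
  moreover have "V \<subseteq> W"
  proof
    fix a assume "a \<in> V"
    then have "a \<otimes> \<one> \<otimes> \<one> \<in> W" using triple \<open>\<one> \<in> V\<close> by blast
    then show "a \<in> W" using \<open>a \<in> V\<close> V3_carrier by (auto simp: V_def)
  qed
  ultimately show ?thesis by blast
qed

end


section \<open>The Birkhoff-Kakutani theorem\<close>

locale metrizable_topgroup = topgroup +
  fixes \<rho> :: "'a \<Rightarrow> 'a \<Rightarrow> real"
  assumes metric: "Metric_space (carrier G) \<rho>"
    and topology_is_metric: "T = Metric_space.mtopology (carrier G) \<rho>"
begin

sublocale R: Metric_space "carrier G" \<rho> by (rule metric)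

definition base_ball :: "nat \<Rightarrow> 'a set" where
  "base_ball n = R.mball \<one> (1 / Suc n)"

lemma base_ball_open: "openin T (base_ball n)"
  by (simp add: base_ball_def topology_is_metric)

lemma one_in_base_ball: "\<one> \<in> base_ball n"
  by (simp add: base_ball_def)

text \<open>U(n+1) is a symmetric open neighbourhood with U(n+1)^3 inside U(n) and inside
  the n-th base ball; the latter makes the chain a neighbourhood base.\<close>

definition next_nbhd :: "nat \<Rightarrow> 'a set \<Rightarrow> 'a set" where
  "next_nbhd n W = (SOME V. openin T V \<and> \<one> \<in> V \<and> V \<subseteq> W \<inter> base_ball n \<and>
     (\<forall>x\<in>V. inv x \<in> V) \<and> (\<forall>a\<in>V. \<forall>b\<in>V. \<forall>c\<in>V. a \<otimes> b \<otimes> c \<in> W \<inter> base_ball n))"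

primrec nbhd_chain :: "nat \<Rightarrow> 'a set" where
  "nbhd_chain 0 = carrier G"
| "nbhd_chain (Suc n) = next_nbhd n (nbhd_chain n)"

lemma next_nbhd:
  fixes n :: nat
  assumes "openin T W" "\<one> \<in> W"
  defines "V \<equiv> next_nbhd n W"
  shows "openin T V \<and> \<one> \<in> V \<and> V \<subseteq> W \<inter> base_ball n \<and> (\<forall>x\<in>V. inv x \<in> V) \<and>
     (\<forall>a\<in>V. \<forall>b\<in>V. \<forall>c\<in>V. a \<otimes> b \<otimes> c \<in> W \<inter> base_ball n)"
proof -
  have "openin T (W \<inter> base_ball n)" "\<one> \<in> W \<inter> base_ball n"
    using assms base_ball_open one_in_base_ball by auto
  from symmetric_triple_nbhd[OF this] show ?thesis
    unfolding V_def next_nbhd_def by (rule someI_ex)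
qed

lemma nbhd_chain_open: "openin T (nbhd_chain n) \<and> \<one> \<in> nbhd_chain n"
proof (induction n)
  case 0 show ?case using openin_topspace[of T] by (simp add: topspace_eq)
qed (simp add: next_nbhd)

lemma one_in_nbhd_chain: "\<one> \<in> nbhd_chain n"
  using nbhd_chain_open by simp

lemma nbhd_chain_symmetric: "x \<in> nbhd_chain n \<Longrightarrow> inv x \<in> nbhd_chain n"
proof (cases n)
  case (Suc m)
  moreover assume "x \<in> nbhd_chain n"
  ultimately show ?thesis using next_nbhd[of "nbhd_chain m" m] nbhd_chain_open by simp
qed simp

lemma nbhd_chain_inv: "x \<in> carrier G \<Longrightarrow> inv x \<in> nbhd_chain n \<longleftrightarrow> x \<in> nbhd_chain n"
  using nbhd_chain_symmetric[of "inv x" n] nbhd_chain_symmetric[of x n] by auto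

lemma nbhd_chain_Suc: "nbhd_chain (Suc n) \<subseteq> nbhd_chain n \<inter> base_ball n"
  using next_nbhd[of "nbhd_chain n" n] nbhd_chain_open by simp

lemma nbhd_chain_triple:
  "a \<in> nbhd_chain (Suc n) \<Longrightarrow> b \<in> nbhd_chain (Suc n) \<Longrightarrow> c \<in> nbhd_chain (Suc n) \<Longrightarrow>
   a \<otimes> b \<otimes> c \<in> nbhd_chain n"
  using next_nbhd[of "nbhd_chain n" n] nbhd_chain_open by simp

lemma nbhd_chain_antimono: "m \<le> n \<Longrightarrow> nbhd_chain n \<subseteq> nbhd_chain m"
proof (induction n rule: dec_induct)
  case (step n)
  then show ?case using nbhd_chain_Suc[of n] by blast
qed simp

definition weight :: "'a \<Rightarrow> real" where
  "weight x = (if \<forall>n. x \<in> nbhd_chain n then 0 else 2 * (1/2) ^ (LEAST n. x \<notin> nbhd_chain n))"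

lemma weight_nonneg: "0 \<le> weight x"
  by (simp add: weight_def)

lemma weight_eq_first_exit:
  assumes "x \<notin> nbhd_chain n"
  obtains m where "m \<le> n" "x \<notin> nbhd_chain m" "weight x = 2 * (1/2) ^ m"
proof
  let ?m = "LEAST n. x \<notin> nbhd_chain n"
  show "?m \<le> n" using assms by (rule Least_le)
  show "x \<notin> nbhd_chain ?m" using assms by (rule LeastI)
  show "weight x = 2 * (1/2) ^ ?m" using assms by (auto simp: weight_def)
qed

lemma weight_le: assumes "x \<in> nbhd_chain n" shows "weight x \<le> (1/2) ^ n"
proof (cases "\<forall>n. x \<in> nbhd_chain n")
  case False
  then obtain k where "x \<notin> nbhd_chain k" by blast
  then obtain m where m: "x \<notin> nbhd_chain m" "weight x = 2 * (1/2) ^ m"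
    by (rule weight_eq_first_exit)
  have "\<not> m \<le> n" using assms m(1) nbhd_chain_antimono[of m n] by blast
  then have "Suc n \<le> m" by simp
  then have "(1/2::real) ^ m \<le> (1/2) ^ Suc n" by (intro power_decreasing) auto
  then show ?thesis using m(2) by simp
qed (simp add: weight_def)

lemma weight_less_imp_nbhd_chain:
  assumes "weight x < (1/2) ^ n" shows "x \<in> nbhd_chain (Suc n)"
proof (rule ccontr)
  assume "x \<notin> nbhd_chain (Suc n)"
  then obtain m where m: "m \<le> Suc n" "weight x = 2 * (1/2) ^ m"
    by (rule weight_eq_first_exit)
  have "(1/2::real) ^ Suc n \<le> (1/2) ^ m" using m(1) by (intro power_decreasing) auto
  then show False using assms m(2) by simp
qed

lemma weight_le_twice:
  assumes "0 \<le> s" "\<And>n. s < (1/2) ^ n \<Longrightarrow> x \<in> nbhd_chain n"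
  shows "weight x \<le> 2 * s"
proof (cases "\<forall>n. x \<in> nbhd_chain n")
  case False
  then obtain k where "x \<notin> nbhd_chain k" by blast
  then obtain m where m: "x \<notin> nbhd_chain m" "weight x = 2 * (1/2) ^ m"
    by (rule weight_eq_first_exit)
  then have "(1/2) ^ m \<le> s" using assms(2) by force
  then show ?thesis using m(2) by simp
qed (simp add: weight_def assms(1))

lemma weight_inv: "x \<in> carrier G \<Longrightarrow> weight (inv x) = weight x"
  by (simp add: weight_def nbhd_chain_inv)

definition list_prod :: "'a list \<Rightarrow> 'a" where
  "list_prod us = foldr (\<otimes>) us \<one>"

lemma list_prod_simps [simp]: "list_prod [] = \<one>" "list_prod (u # us) = u \<otimes> list_prod us"
  by (simp_all add: list_prod_def)

lemma list_prod_closed [simp]: "set us \<subseteq> carrier G \<Longrightarrow> list_prod us \<in> carrier G"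
  by (induction us) auto

lemma list_prod_append:
  "set us \<subseteq> carrier G \<Longrightarrow> set vs \<subseteq> carrier G \<Longrightarrow> list_prod (us @ vs) = list_prod us \<otimes> list_prod vs"
  by (induction us) (auto simp: m_assoc)

lemma list_prod_rev_inv:
  "set us \<subseteq> carrier G \<Longrightarrow> list_prod (rev (map (\<lambda>x. inv x) us)) = inv (list_prod us)"
proof (induction us)
  case (Cons a us)
  then have "list_prod (rev (map (\<lambda>x. inv x) (a # us))) = inv (list_prod us) \<otimes> inv a"
    using list_prod_append[of "rev (map (\<lambda>x. inv x) us)" "[inv a]"] by auto
  then show ?case using Cons.prems by (simp add: inv_mult_group)
qed simp

abbreviation cost :: "'a list \<Rightarrow> real" where
  "cost us \<equiv> sum_list (map weight us)"

lemma cost_nonneg: "0 \<le> cost us"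
  by (intro sum_list_nonneg) (auto simp: weight_nonneg)

text \<open>Split the
  list around an element so that both sides weigh at most half; by induction both side
  products lie in U(n+1), as does the middle element, and U(n+1)^3 <= U(n).\<close>

lemma list_prod_in_nbhd_chain:
  assumes "set us \<subseteq> carrier G" "cost us < (1/2) ^ n"
  shows "list_prod us \<in> nbhd_chain n"
  using assms
proof (induction "length us" arbitrary: us n rule: less_induct)
  case less
  show ?case
  proof (cases "us = []")
    case True then show ?thesis by (simp add: one_in_nbhd_chain)
  next
    case False
    have "\<exists>xs a ys. us = xs @ a # ys \<and> cost xs \<le> cost us / 2 \<and> cost ys \<le> cost us / 2"
      using False by (intro sum_list_split_around_element) (auto simp: cost_nonneg weight_nonneg)
    then obtain xs a ys where split: "us = xs @ a # ys"
        "cost xs \<le> cost us / 2" "cost ys \<le> cost us / 2"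
      by blast
    have c: "set xs \<subseteq> carrier G" "a \<in> carrier G" "set ys \<subseteq> carrier G"
      using less.prems split by auto
    have "cost xs < (1/2) ^ Suc n" "cost ys < (1/2) ^ Suc n"
      using split(2,3) less.prems(2) by auto
    then have xs_in: "list_prod xs \<in> nbhd_chain (Suc n)" and ys_in: "list_prod ys \<in> nbhd_chain (Suc n)"
      by (intro less.hyps; simp add: c split(1))+
    have "weight a \<le> cost us"
      using split(1) cost_nonneg[of xs] cost_nonneg[of ys] by simp
    then have a_in: "a \<in> nbhd_chain (Suc n)"
      using less.prems(2) by (intro weight_less_imp_nbhd_chain) auto
    have "list_prod xs \<otimes> a \<otimes> list_prod ys \<in> nbhd_chain n"
      using nbhd_chain_triple[OF xs_in a_in ys_in] .
    then show ?thesis using c by (simp add: split(1) list_prod_append m_assoc)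
  qed
qed

lemma weight_list_prod_le: "set us \<subseteq> carrier G \<Longrightarrow> weight (list_prod us) \<le> 2 * cost us"
  using cost_nonneg list_prod_in_nbhd_chain by (intro weight_le_twice) auto

definition factorisation_costs :: "'a \<Rightarrow> real set" where
  "factorisation_costs z = {cost us | us. set us \<subseteq> carrier G \<and> list_prod us = z}"

definition bk_norm :: "'a \<Rightarrow> real" where
  "bk_norm z = Inf (factorisation_costs z)"

lemma bdd_below_factorisation_costs: "bdd_below (factorisation_costs z)"
  unfolding factorisation_costs_def by (rule bdd_belowI[of _ 0]) (auto simp: cost_nonneg)

lemma bk_norm_le_cost: "set us \<subseteq> carrier G \<Longrightarrow> list_prod us = z \<Longrightarrow> bk_norm z \<le> cost us"
  unfolding bk_norm_def
  by (rule cInf_lower[OF _ bdd_below_factorisation_costs]) (auto simp: factorisation_costs_def)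

lemma bk_norm_greatest:
  assumes "z \<in> carrier G" "\<And>us. set us \<subseteq> carrier G \<Longrightarrow> list_prod us = z \<Longrightarrow> c \<le> cost us"
  shows "c \<le> bk_norm z"
proof -
  have "cost [z] \<in> factorisation_costs z"
    using assms(1) unfolding factorisation_costs_def by (intro CollectI exI[of _ "[z]"]) simp
  then have "factorisation_costs z \<noteq> {}" by blast
  then show ?thesis
    unfolding bk_norm_def by (rule cInf_greatest) (auto simp: factorisation_costs_def assms(2))
qed

lemma bk_norm_nonneg: "z \<in> carrier G \<Longrightarrow> 0 \<le> bk_norm z"
  by (rule bk_norm_greatest) (auto simp: cost_nonneg)

lemma bk_norm_le_weight: "z \<in> carrier G \<Longrightarrow> bk_norm z \<le> weight z"
  using bk_norm_le_cost[of "[z]" z] by simp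

lemma weight_le_bk_norm: assumes "z \<in> carrier G" shows "weight z \<le> 2 * bk_norm z"
proof -
  have "weight z / 2 \<le> bk_norm z"
  proof (rule bk_norm_greatest[OF assms])
    fix us assume "set us \<subseteq> carrier G" "list_prod us = z"
    then show "weight z / 2 \<le> cost us" using weight_list_prod_le[of us] by simp
  qed
  then show ?thesis by simp
qed

text \<open>The norm vanishes at the identity and is invariant under inversion, since reversing
  and inverting a factorisation of z factorises z^-1 at the same cost.\<close>

lemma bk_norm_one: "bk_norm \<one> = 0"
  using bk_norm_le_cost[of "[]" \<one>] bk_norm_nonneg[of \<one>] by simp

lemma bk_norm_inv_le: assumes "z \<in> carrier G" shows "bk_norm (inv z) \<le> bk_norm z"
proof (rule bk_norm_greatest[OF assms])
  fix us assume us: "set us \<subseteq> carrier G" "list_prod us = z"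
  have "cost (rev (map (\<lambda>x. inv x) us)) = sum_list (map (\<lambda>x. weight (inv x)) us)"
    by (simp add: rev_map[symmetric] o_def)
  also have "\<dots> = cost us"
    using us(1) by (intro arg_cong[where f = sum_list] map_cong) (auto simp: weight_inv)
  moreover have "bk_norm (inv z) \<le> cost (rev (map (\<lambda>x. inv x) us))"
    using us by (intro bk_norm_le_cost) (auto simp: list_prod_rev_inv)
  ultimately show "bk_norm (inv z) \<le> cost us" by simp
qed

lemma bk_norm_inv: "z \<in> carrier G \<Longrightarrow> bk_norm (inv z) = bk_norm z"
  using bk_norm_inv_le[of z] bk_norm_inv_le[of "inv z"] by simp

text \<open>Subadditivity: concatenating factorisations of a and b factorises a * b.\<close>

lemma bk_norm_mult:
  assumes "a \<in> carrier G" "b \<in> carrier G" shows "bk_norm (a \<otimes> b) \<le> bk_norm a + bk_norm b"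
proof -
  have "bk_norm (a \<otimes> b) - bk_norm a \<le> bk_norm b"
  proof (rule bk_norm_greatest[OF assms(2)])
    fix vs assume vs: "set vs \<subseteq> carrier G" "list_prod vs = b"
    have "bk_norm (a \<otimes> b) - cost vs \<le> bk_norm a"
    proof (rule bk_norm_greatest[OF assms(1)])
      fix us assume "set us \<subseteq> carrier G" "list_prod us = a"
      then have "bk_norm (a \<otimes> b) \<le> cost (us @ vs)"
        using vs by (intro bk_norm_le_cost) (auto simp: list_prod_append)
      then show "bk_norm (a \<otimes> b) - cost vs \<le> cost us" by simp
    qed
    then show "bk_norm (a \<otimes> b) - bk_norm a \<le> cost vs" by simp
  qed
  then show ?thesis by simp
qed

text \<open>An element of norm zero lies in every U(n), hence in every rho-ball around the
  identity, hence is the identity.\<close>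

lemma bk_norm_eq_0: assumes "z \<in> carrier G" "bk_norm z = 0" shows "z = \<one>"
proof -
  have "weight z \<le> 0" using weight_le_bk_norm[OF assms(1)] assms(2) by simp
  then have "weight z < (1/2) ^ n" for n
    using zero_less_power[of "1/2::real" n] by linarith
  then have "z \<in> base_ball n" for n
    using weight_less_imp_nbhd_chain nbhd_chain_Suc[of n] by blast
  then have close: "\<rho> \<one> z < inverse (Suc n)" for n
    by (simp add: base_ball_def inverse_eq_divide)
  have "\<not> 0 < \<rho> \<one> z"
  proof
    assume "0 < \<rho> \<one> z"
    then obtain n where "inverse (Suc n) < \<rho> \<one> z" using reals_Archimedean by blast
    then show False using close[of n] by simp
  qed
  then have "\<rho> \<one> z = 0" using R.nonneg[of \<one> z] by linarith
  then show ?thesis using assms(1) by simp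
qed

definition bk_dist :: "'a \<Rightarrow> 'a \<Rightarrow> real" where
  "bk_dist x y = (if x \<in> carrier G \<and> y \<in> carrier G then bk_norm (inv x \<otimes> y) else 0)"

lemma bk_dist_metric: "Metric_space (carrier G) bk_dist"
proof
  fix x y show "0 \<le> bk_dist x y" by (simp add: bk_dist_def bk_norm_nonneg)
  show "bk_dist x y = bk_dist y x"
  proof (cases "x \<in> carrier G \<and> y \<in> carrier G")
    case True
    then have "inv y \<otimes> x = inv (inv x \<otimes> y)" by (simp add: inv_mult_group)
    then show ?thesis using True by (simp add: bk_dist_def bk_norm_inv)
  qed (auto simp: bk_dist_def)
next
  fix x y assume xy: "x \<in> carrier G" "y \<in> carrier G"
  show "bk_dist x y = 0 \<longleftrightarrow> x = y"
  proof
    assume "bk_dist x y = 0"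
    then have "inv x \<otimes> y = \<one>" using xy bk_norm_eq_0 by (simp add: bk_dist_def)
    then show "x = y" using xy inv_solve_left'[of \<one> x y] by simp
  qed (simp add: bk_dist_def xy bk_norm_one)
next
  fix x y z assume xyz: "x \<in> carrier G" "y \<in> carrier G" "z \<in> carrier G"
  have "inv x \<otimes> z = (inv x \<otimes> y) \<otimes> (inv y \<otimes> z)" using xyz
    by (simp add: m_assoc[symmetric]) (simp add: m_assoc)
  then show "bk_dist x z \<le> bk_dist x y + bk_dist y z" using xyz bk_norm_mult by (simp add: bk_dist_def)
qed

lemma bk_dist_left_invariant: "left_invariant G bk_dist"
  unfolding left_invariant_def bk_dist_def by (simp add: inv_mult_group m_assoc inv_mult_cancel_left)

sublocale BK: left_invariant_metric_group G bk_dist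
  by (intro left_invariant_metric_group.intro is_group bk_dist_metric
      left_invariant_metric_group_axioms.intro bk_dist_left_invariant)

text \<open>Balls of bk_dist and the neighbourhoods U(n) are mutually nested: the open
  bk_dist-ball of radius 2^-(n+1) at x lies in x * U(n+1), and x * U(n) lies in the
  closed bk_dist-ball of radius 2^-n.  Hence both topologies agree.\<close>

lemma openin_bk_imp_openin:
  assumes "openin BK.mtopology S" shows "openin T S"
proof (subst openin_subopen, intro ballI)
  fix x assume "x \<in> S"
  then obtain r where x: "x \<in> carrier G" and r: "r > 0" "BK.mball x r \<subseteq> S"
    using assms BK.openin_mtopology by blast
  obtain n where n: "(1/2::real) ^ n < r" using real_arch_pow_inv[of r "1/2"] r by auto
  define V where "V = {y \<in> carrier G. inv x \<otimes> y \<in> nbhd_chain n}"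
  have "openin T V" unfolding V_def
    using openin_left_translation_preimage x nbhd_chain_open by simp
  moreover have "x \<in> V" using x by (simp add: V_def one_in_nbhd_chain)
  moreover have "V \<subseteq> S"
  proof
    fix y assume "y \<in> V"
    then have y: "y \<in> carrier G" "inv x \<otimes> y \<in> nbhd_chain n" by (auto simp: V_def)
    have "bk_dist x y \<le> weight (inv x \<otimes> y)" using x y by (simp add: bk_dist_def bk_norm_le_weight)
    also have "\<dots> \<le> (1/2) ^ n" by (rule weight_le[OF y(2)])
    finally show "y \<in> S" using x y n r by auto
  qed
  ultimately show "\<exists>V. openin T V \<and> x \<in> V \<and> V \<subseteq> S" by blast
qed

lemma openin_imp_openin_bk:
  assumes "openin T S" shows "openin BK.mtopology S"
  unfolding BK.openin_mtopology
proof (intro conjI allI impI)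
  show S: "S \<subseteq> carrier G" using openin_subset[OF assms] topspace_eq by simp
  fix x assume "x \<in> S"
  with S have x: "x \<in> carrier G" by auto
  define W where "W = {u \<in> carrier G. x \<otimes> u \<in> S}"
  have "openin R.mtopology W" unfolding W_def
    using openin_left_translation_preimage[OF x assms] topology_is_metric by simp
  moreover have "\<one> \<in> W" using x \<open>x \<in> S\<close> by (simp add: W_def)
  ultimately obtain e where e: "e > 0" "R.mball \<one> e \<subseteq> W"
    unfolding R.openin_mtopology by blast
  obtain m where m: "1 / Suc m < e"
    using reals_Archimedean[OF e(1)] by (auto simp: inverse_eq_divide)
  have "base_ball m \<subseteq> R.mball \<one> e"
    using m unfolding base_ball_def by auto
  then have UW: "nbhd_chain (Suc m) \<subseteq> W"
    using nbhd_chain_Suc[of m] e(2) by blast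
  have "BK.mball x ((1/2) ^ Suc m) \<subseteq> S"
  proof
    fix y assume "y \<in> BK.mball x ((1/2) ^ Suc m)"
    then have y: "y \<in> carrier G" "bk_dist x y < (1/2) ^ Suc m" by auto
    have "weight (inv x \<otimes> y) \<le> 2 * bk_dist x y" using x y by (simp add: bk_dist_def weight_le_bk_norm)
    also have "\<dots> < (1/2) ^ m" using y(2) by simp
    finally have "inv x \<otimes> y \<in> W" using UW weight_less_imp_nbhd_chain by blast
    then show "y \<in> S" using x y by (simp add: W_def m_assoc[symmetric])
  qed
  then show "\<exists>r>0. BK.mball x r \<subseteq> S" by (intro exI[of _ "(1/2) ^ Suc m"]) simp
qed

theorem exists_left_invariant_compatible_metric:
  "\<exists>d. compatible_metric T d \<and> left_invariant G d"
proof -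
  have "BK.mtopology = T"
    using openin_bk_imp_openin openin_imp_openin_bk by (auto simp: topology_eq)
  then show ?thesis
    using bk_dist_metric bk_dist_left_invariant topspace_eq unfolding compatible_metric_def by metis
qed

end


theorem (in topgroup) Birkhoff_Kakutani:
  assumes "metrizable_space T"
  shows "\<exists>d. compatible_metric T d \<and> left_invariant G d"
proof -
  obtain M \<rho> where M: "Metric_space M \<rho>" "T = Metric_space.mtopology M \<rho>"
    using assms unfolding metrizable_space_def by blast
  then have "M = carrier G"
    using Metric_space.topspace_mtopology topspace_eq by metis
  moreover have "topgroup G T" by (intro topgroup.intro is_group topgroup_axioms)
  ultimately have "metrizable_topgroup G T \<rho>"
    using M by (simp add: metrizable_topgroup_def metrizable_topgroup_axioms_def)
  then show ?thesis by (rule metrizable_topgroup.exists_left_invariant_compatible_metric)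
qed

lemma (in topgroup) compatible_left_invariant_metric:
  assumes "compatible_metric T d" "left_invariant G d"
  shows "left_invariant_metric_group G d" "T = Metric_space.mtopology (carrier G) d"
  using assms topspace_eq
  by (simp_all add: compatible_metric_def left_invariant_metric_group_def
      left_invariant_metric_group_axioms_def group_axioms)


theorem theorem2p4:
  fixes G :: "('a, 'b) monoid_scheme" and T :: "'a topology"
  assumes "topological_group G T" and "metrizable_space T"
  shows "Smirnov_Sc T (O_nbd G T) (open_covers T) \<longleftrightarrow>
         (\<forall>d. compatible_metric T d \<and> left_invariant G d \<longrightarrow> finitary_Haver T d)"
proof -
  interpret topgroup G T
    using assms(1) by (simp add: topgroup_def topgroup_axioms_def topological_group_def)
  show ?thesis
  proof
    assume smirnov: "Smirnov_Sc T (O_nbd G T) (open_covers T)"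
    show "\<forall>d. compatible_metric T d \<and> left_invariant G d \<longrightarrow> finitary_Haver T d"
    proof (intro allI impI, elim conjE)
      fix d assume "compatible_metric T d" "left_invariant G d"
      note metric_group = compatible_left_invariant_metric[OF this]
      show "finitary_Haver T d"
        using left_invariant_metric_group.Smirnov_imp_finitary_Haver[OF metric_group(1)] smirnov
        unfolding metric_group(2) by blast
    qed
  next
    obtain d where d: "compatible_metric T d" "left_invariant G d"
      using Birkhoff_Kakutani assms(2) by blast
    note metric_group = compatible_left_invariant_metric[OF d]
    assume "\<forall>d. compatible_metric T d \<and> left_invariant G d \<longrightarrow> finitary_Haver T d"
    with d have "finitary_Haver T d" by blast
    then show "Smirnov_Sc T (O_nbd G T) (open_covers T)"
      using left_invariant_metric_group.finitary_Haver_imp_Smirnov[OF metric_group(1)]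
      unfolding metric_group(2) by blast
  qed
qed

end
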